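(* For every $n\in\{2,6,10,\dots\}$, the greedy local search procedure applied to $g_n$ starting from the zero vector has no ties at any step (so its path is uniquely determined), it terminates at the unique local maximum of $g_n$, namely the complement of the characteristic vector of the set $\{4,8,\dots,n-2\}$ (i.e. the vector with $x_i=0$ for $i\in\{4,8,\dots,n-2\}$ and $x_i=1$ otherwise), and the path has length greater than $2^{n/4}$. In particular greedy local search takes exponentially many steps, both in $n$ and in the size of $g_n$.
   Context: For $n\in\{2,6,10,\dots\}$ define polynomials $g_n$ in variables $x_1,\dots,x_n$ (evaluated on $\{0,1\}^n$) recursively: $g_2(x_1,x_2):=2x_1+x_2$, and, with $\mathbf{x}=(x_1,\dots,x_n)$ and $M_n:=4\big(\max_{\{0,1\}^n} g_n-\min_{\{0,1\}^n} g_n\big)$, $g_{n+4}(\mathbf{x},x_{n+1},x_{n+2},x_{n+3},x_{n+4}) := 4g_n(\mathbf{x}) + 3x_{n+1} - \sum_{i=1}^n (2M_n+i+2)x_i x_{n+2} + 3M_n n\, x_{n+1}x_{n+2} + 2x_{n+3} + M_n x_{n+1}x_{n+3} - 4M_n n\, x_{n+2}x_{n+4} + 5M_n n\, x_{n+3}x_{n+4}$. Greedy local search on $f:\{0,1\}^m\to\mathbb{R}$: starting from a vertex, at each step, if some neighbor (vertex differing in exactly one coordinate) has strictly larger value, move to a neighbor with the largest value among all neighbors; otherwise stop (the current vertex is a local maximum). A tie occurs if two distinct neighbors attain this largest value. The length of the path is the number of moves. *)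

theory Defs
  imports Complex_Main
begin

text \<open>A vertex of the cube {0,1}^m is represented by the set S \<subseteq> {1..m} of its
  coordinates equal to 1; the coordinate x_i is xv S i.\<close>

definition xv :: "nat set \<Rightarrow> nat \<Rightarrow> int" where
  "xv S i = (if i \<in> S then 1 else 0)"

text \<open>gk k is g_n for n = 4k+2; it only depends on the coordinates 1..n.\<close>

primrec gk :: "nat \<Rightarrow> nat set \<Rightarrow> int" where
  "gk 0 S = 2 * xv S 1 + xv S 2"
| "gk (Suc k) S =
     (let n = 4 * k + 2;
          M = 4 * (Max (gk k ` Pow {1..n}) - Min (gk k ` Pow {1..n}));
          x = xv S
      in 4 * gk k S + 3 * x (n+1)
         - (\<Sum>i=1..n. (2 * M + int i + 2) * x i * x (n+2))
         + 3 * M * int n * x (n+1) * x (n+2)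
         + 2 * x (n+3) + M * x (n+1) * x (n+3)
         - 4 * M * int n * x (n+2) * x (n+4)
         + 5 * M * int n * x (n+3) * x (n+4))"

definition g :: "nat \<Rightarrow> nat set \<Rightarrow> int" where
  "g n = gk ((n - 2) div 4)"

definition nbrs :: "nat \<Rightarrow> nat set \<Rightarrow> nat set set" where
  "nbrs m S = (\<lambda>i. if i \<in> S then S - {i} else insert i S) ` {1..m}"

definition local_max :: "nat \<Rightarrow> (nat set \<Rightarrow> int) \<Rightarrow> nat set \<Rightarrow> bool" where
  "local_max m f S \<longleftrightarrow> (\<forall>T \<in> nbrs m S. f T \<le> f S)"

definition greedy_move_no_tie :: "nat \<Rightarrow> (nat set \<Rightarrow> int) \<Rightarrow> nat set \<Rightarrow> nat set \<Rightarrow> bool" where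
  "greedy_move_no_tie m f S T \<longleftrightarrow>
     T \<in> nbrs m S \<and> f S < f T \<and> (\<forall>U \<in> nbrs m S. U \<noteq> T \<longrightarrow> f U < f T)"

text \<open>Its length (number of moves) is length ps - 1.\<close>
definition greedy_path_no_ties :: "nat \<Rightarrow> (nat set \<Rightarrow> int) \<Rightarrow> nat set list \<Rightarrow> bool" where
  "greedy_path_no_ties m f ps \<longleftrightarrow> ps \<noteq> [] \<and>
     (\<forall>j < length ps - 1. greedy_move_no_tie m f (ps ! j) (ps ! Suc j)) \<and>
     local_max m f (last ps)"

end

theory Submission
  imports Defs
begin

text \<open>Write n = 4k + 2 and M = M_n, and split a vertex of the (n+4)-cube as U \<union> E with
  U \<subseteq> {1..n} and E given by the bits x_{n+1}, ..., x_{n+4}. Then g_{n+4}(U \<union> E) is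
  4 g_n(U) plus terms in the four bits, minus x_{n+2} \<Sum>_{i\<in>U} (2M + i + 2), and 4 g_n varies by
  at most M, which is small against the coefficients of the bit terms. Starting from 0,
  greedy search first retraces the path of g_n to its peak T, then sets x_{n+1} and x_{n+2}; the
  penalty now makes it remove the elements of T one by one, after which it sets x_{n+3}, x_{n+4},
  clears x_{n+2} and retraces the path of g_n a second time. So the path length at least doubles
  from n to n + 4, and the only local maximum is T \<union> {n+1, n+3, n+4}.

  While the elements of T are removed, greedy search removes the a maximising
  4 g_n(U - {a}) + a. That this choice is never tied is not automatic: it is part of the
  induction hypothesis (a clearing sequence of the peak), and it is inherited by the next level.\<close>

definition flip :: "nat \<Rightarrow> nat set \<Rightarrow> nat set" where
  "flip i S = (if i \<in> S then S - {i} else insert i S)"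

lemma nbrs_conv_flip: "nbrs m S = (\<lambda>i. flip i S) ` {1..m}"
  by (simp add: nbrs_def flip_def)

lemma local_max_iff_flip: "local_max m f S \<longleftrightarrow> (\<forall>j\<in>{1..m}. f (flip j S) \<le> f S)"
  unfolding local_max_def nbrs_conv_flip by auto

lemma flip_subset: "j \<in> {1..n} \<Longrightarrow> U \<subseteq> {1..n} \<Longrightarrow> flip j U \<subseteq> {1..n}"
  by (auto simp: flip_def)

definition greedy_step :: "nat \<Rightarrow> (nat set \<Rightarrow> int) \<Rightarrow> nat set \<Rightarrow> nat \<Rightarrow> bool" where
  "greedy_step m f S j \<longleftrightarrow> j \<in> {1..m} \<and> f S < f (flip j S) \<and>
     (\<forall>i\<in>{1..m}. i \<noteq> j \<longrightarrow> f (flip i S) < f (flip j S))"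

fun greedy_run :: "nat \<Rightarrow> (nat set \<Rightarrow> int) \<Rightarrow> nat set \<Rightarrow> nat list \<Rightarrow> nat set \<Rightarrow> bool" where
  "greedy_run m f S [] T \<longleftrightarrow> S = T"
| "greedy_run m f S (j # js) T \<longleftrightarrow> greedy_step m f S j \<and> greedy_run m f (flip j S) js T"

lemma greedy_run_append:
  "greedy_run m f S (xs @ ys) U \<longleftrightarrow> (\<exists>T. greedy_run m f S xs T \<and> greedy_run m f T ys U)"
  by (induction xs arbitrary: S) auto

lemma greedy_run_value_le: "greedy_run m f S js T \<Longrightarrow> f S \<le> f T"
  by (induction js arbitrary: S) (force simp: greedy_step_def)+

lemma greedy_move_no_tie_flip:
  assumes "greedy_step m f S j"
  shows "greedy_move_no_tie m f S (flip j S)"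
  using assms unfolding greedy_step_def greedy_move_no_tie_def nbrs_conv_flip by auto

lemma greedy_path_of_run:
  assumes "greedy_run m f S js T" "local_max m f T"
  shows "\<exists>ps. greedy_path_no_ties m f ps \<and> hd ps = S \<and> last ps = T \<and> length ps = Suc (length js)"
  using assms(1)
proof (induction js arbitrary: S)
  case Nil
  then show ?case using assms(2) by (intro exI[of _ "[S]"]) (auto simp: greedy_path_no_ties_def)
next
  case (Cons j js)
  then obtain ps where ps: "greedy_path_no_ties m f ps" "hd ps = flip j S" "last ps = T"
    "length ps = Suc (length js)" by auto
  have move: "greedy_move_no_tie m f S (hd ps)"
    using Cons.prems ps(2) by (simp add: greedy_move_no_tie_flip)
  have "greedy_path_no_ties m f (S # ps)"
    unfolding greedy_path_no_ties_def
  proof (intro conjI allI impI)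
    fix i assume i: "i < length (S # ps) - 1"
    show "greedy_move_no_tie m f ((S # ps) ! i) ((S # ps) ! Suc i)"
      using move ps(1) i by (cases i) (auto simp: greedy_path_no_ties_def hd_conv_nth)
  qed (use ps in \<open>auto simp: greedy_path_no_ties_def\<close>)
  then show ?case using ps by (intro exI[of _ "S # ps"]) (auto simp: greedy_path_no_ties_def)
qed

text \<open>As f is integer valued, every lifted move gains at least c, so new coordinates that gain
  less than c never compete with it.\<close>

lemma greedy_run_lift:
  assumes "greedy_run n f S js T" "S \<subseteq> {1..n}" "n \<le> m" "E \<inter> {1..n} = {}" "c > 0"
    and lift: "\<And>U. U \<subseteq> {1..n} \<Longrightarrow> F (U \<union> E) = c * f U + d"
    and new: "\<And>U j. U \<subseteq> {1..n} \<Longrightarrow> j \<in> {n<..m} \<Longrightarrow> F (flip j (U \<union> E)) < F (U \<union> E) + c"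
  shows "greedy_run m F (S \<union> E) js (T \<union> E)"
  using assms(1,2)
proof (induction js arbitrary: S)
  case Nil then show ?case by simp
next
  case (Cons j js)
  have step: "greedy_step n f S j" and rest: "greedy_run n f (flip j S) js T"
    using Cons.prems by auto
  have flip_low: "flip i (S \<union> E) = flip i S \<union> E" if "i \<in> {1..n}" for i
    using assms(4) that by (auto simp: flip_def)
  have val: "F (flip i (S \<union> E)) = c * f (flip i S) + d" if "i \<in> {1..n}" for i
    using flip_low[OF that] lift flip_subset[OF that Cons.prems(2)] by simp
  have j: "j \<in> {1..n}" using step by (simp add: greedy_step_def)
  have gain: "F (S \<union> E) + c \<le> F (flip j (S \<union> E))"
  proof -
    have "c * (f S + 1) \<le> c * f (flip j S)"
      using step \<open>c > 0\<close> by (intro mult_left_mono) (auto simp: greedy_step_def)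
    then show ?thesis using val[OF j] lift[OF Cons.prems(2)] by (simp add: algebra_simps)
  qed
  have "greedy_step m F (S \<union> E) j"
    unfolding greedy_step_def
  proof (intro conjI ballI impI)
    show "j \<in> {1..m}" using j assms(3) by auto
    show "F (S \<union> E) < F (flip j (S \<union> E))" using gain \<open>c > 0\<close> by simp
  next
    fix i assume i: "i \<in> {1..m}" "i \<noteq> j"
    show "F (flip i (S \<union> E)) < F (flip j (S \<union> E))"
    proof (cases "i \<le> n")
      case True
      then have "f (flip i S) < f (flip j S)" using step i by (auto simp: greedy_step_def)
      then show ?thesis using val[of i] val[OF j] \<open>c > 0\<close> i True by simp
    next
      case False
      then show ?thesis using new[OF Cons.prems(2), of i] i gain by auto
    qed
  qed
  moreover have "greedy_run m F (flip j (S \<union> E)) js (T \<union> E)"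
    using Cons.IH[OF rest flip_subset[OF j Cons.prems(2)]] flip_low[OF j] by simp
  ultimately show ?case by simp
qed

definition nvars :: "nat \<Rightarrow> nat" where
  "nvars k = 4 * k + 2"

definition spread :: "nat \<Rightarrow> int" where
  "spread k = 4 * (Max (gk k ` Pow {1..nvars k}) - Min (gk k ` Pow {1..nvars k}))"

definition penalty :: "nat \<Rightarrow> nat set \<Rightarrow> int" where
  "penalty k U = (\<Sum>i\<in>U. 2 * spread k + int i + 2)"

definition ext_bits :: "nat \<Rightarrow> bool \<Rightarrow> bool \<Rightarrow> bool \<Rightarrow> bool \<Rightarrow> nat set" where
  "ext_bits n b1 b2 b3 b4 =
     {i. (b1 \<and> i = n + 1) \<or> (b2 \<and> i = n + 2) \<or> (b3 \<and> i = n + 3) \<or> (b4 \<and> i = n + 4)}"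

definition peak :: "nat \<Rightarrow> nat set" where
  "peak k = {1..nvars k} - {i. 4 \<le> i \<and> i \<le> nvars k - 2 \<and> 4 dvd i}"

lemma nvars_Suc: "nvars (Suc k) = nvars k + 4"
  by (simp add: nvars_def)

lemma int_nvars_ge_2: "2 \<le> int (nvars k)"
  by (simp add: nvars_def)

lemma peak_subset: "peak k \<subseteq> {1..nvars k}"
  by (auto simp: peak_def)

lemma peak_Suc: "peak (Suc k) = peak k \<union> ext_bits (nvars k) True False True True"
proof (rule set_eqI)
  fix x :: nat
  show "x \<in> peak (Suc k) \<longleftrightarrow> x \<in> peak k \<union> ext_bits (nvars k) True False True True"
    by (simp add: peak_def nvars_def ext_bits_def) presburger
qed

lemma gk_cong: "(\<And>i. i \<in> {1..nvars k} \<Longrightarrow> i \<in> S \<longleftrightarrow> i \<in> S') \<Longrightarrow> gk k S = gk k S'"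
proof (induction k arbitrary: S S')
  case 0
  then show ?case by (simp add: nvars_def xv_def)
next
  case (Suc k)
  have x: "xv S i = xv S' i" if "i \<in> {1..nvars k + 4}" for i
    using Suc.prems that by (auto simp: xv_def nvars_Suc)
  have "gk k S = gk k S'" using Suc.prems by (intro Suc.IH) (auto simp: nvars_Suc)
  moreover have "(\<Sum>i=1..nvars k. (2 * spread k + int i + 2) * xv S i * xv S (nvars k + 2))
      = (\<Sum>i=1..nvars k. (2 * spread k + int i + 2) * xv S' i * xv S' (nvars k + 2))"
    by (intro sum.cong refl) (simp add: x)
  ultimately show ?case using x[of "nvars k + 1"] x[of "nvars k + 2"] x[of "nvars k + 3"] x[of "nvars k + 4"]
    by (simp add: Let_def nvars_def spread_def)
qed

lemma gk_Suc_unfold: "gk (Suc k) S = 4 * gk k S + 3 * xv S (nvars k + 1)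
     - (\<Sum>i=1..nvars k. (2 * spread k + int i + 2) * xv S i * xv S (nvars k + 2))
     + 3 * spread k * int (nvars k) * xv S (nvars k + 1) * xv S (nvars k + 2)
     + 2 * xv S (nvars k + 3) + spread k * xv S (nvars k + 1) * xv S (nvars k + 3)
     - 4 * spread k * int (nvars k) * xv S (nvars k + 2) * xv S (nvars k + 4)
     + 5 * spread k * int (nvars k) * xv S (nvars k + 3) * xv S (nvars k + 4)"
  unfolding gk.simps Let_def nvars_def spread_def ..

declare gk.simps [simp del]

lemma gk_union_ext_bits: "gk k (U \<union> ext_bits (nvars k) b1 b2 b3 b4) = gk k U"
  by (rule gk_cong) (auto simp: ext_bits_def)

lemma sum_mult_xv: "U \<subseteq> {1..n} \<Longrightarrow> (\<Sum>i=1..n. a i * xv U i) = (\<Sum>i\<in>U. a i)"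
  by (simp add: xv_def sum.inter_restrict[symmetric] Int_absorb1 if_distrib cong: if_cong)

lemma gk_Suc_ext_bits:
  assumes U: "U \<subseteq> {1..nvars k}"
  shows "gk (Suc k) (U \<union> ext_bits (nvars k) b1 b2 b3 b4) =
    4 * gk k U + 3 * of_bool b1 - of_bool b2 * penalty k U
    + 3 * (spread k * int (nvars k)) * of_bool b1 * of_bool b2
    + 2 * of_bool b3 + spread k * of_bool b1 * of_bool b3
    - 4 * (spread k * int (nvars k)) * of_bool b2 * of_bool b4
    + 5 * (spread k * int (nvars k)) * of_bool b3 * of_bool b4"
proof -
  let ?S = "U \<union> ext_bits (nvars k) b1 b2 b3 b4"
  have top: "xv ?S (nvars k + 1) = of_bool b1" "xv ?S (nvars k + 2) = of_bool b2"
    "xv ?S (nvars k + 3) = of_bool b3" "xv ?S (nvars k + 4) = of_bool b4"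
    using U by (auto simp: xv_def ext_bits_def)
  have low: "xv ?S i = xv U i" if "i \<in> {1..nvars k}" for i
    using that by (auto simp: xv_def ext_bits_def)
  have "(\<Sum>i=1..nvars k. (2 * spread k + int i + 2) * xv ?S i * xv ?S (nvars k + 2))
      = (\<Sum>i=1..nvars k. (2 * spread k + int i + 2) * xv U i) * of_bool b2"
    unfolding sum_distrib_right by (intro sum.cong refl) (simp only: low top)
  also have "\<dots> = of_bool b2 * penalty k U"
    using sum_mult_xv[OF U] by (simp add: penalty_def)
  finally show ?thesis
    unfolding gk_Suc_unfold top gk_union_ext_bits by (simp only: mult.assoc)
qed

lemma ext_bits_inter_low: "ext_bits n b1 b2 b3 b4 \<inter> {1..n} = {}"
  by (auto simp: ext_bits_def)

lemma ext_bits_False: "ext_bits n False False False False = {}"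
  by (auto simp: ext_bits_def)

lemma flip_ext_bits_low:
  "j \<in> {1..n} \<Longrightarrow> flip j (U \<union> ext_bits n b1 b2 b3 b4) = flip j U \<union> ext_bits n b1 b2 b3 b4"
  by (auto simp: flip_def ext_bits_def)

text \<open>The coordinates n + 1 and n + 2 are written Suc n and Suc (Suc n), their simp normal
  forms, so that these rules still apply after simplification.\<close>

lemma flip_ext_bits:
  assumes "U \<subseteq> {1..n}"
  shows "flip (Suc n) (U \<union> ext_bits n b1 b2 b3 b4) = U \<union> ext_bits n (\<not> b1) b2 b3 b4"
    and "flip (Suc (Suc n)) (U \<union> ext_bits n b1 b2 b3 b4) = U \<union> ext_bits n b1 (\<not> b2) b3 b4"
    and "flip (n + 3) (U \<union> ext_bits n b1 b2 b3 b4) = U \<union> ext_bits n b1 b2 (\<not> b3) b4"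
    and "flip (n + 4) (U \<union> ext_bits n b1 b2 b3 b4) = U \<union> ext_bits n b1 b2 b3 (\<not> b4)"
  using assms by (auto simp: flip_def ext_bits_def)

lemma mem_ext_bits:
  "j \<in> ext_bits n b1 b2 b3 b4 \<longleftrightarrow>
    (b1 \<and> j = Suc n) \<or> (b2 \<and> j = Suc (Suc n)) \<or> (b3 \<and> j = n + 3) \<or> (b4 \<and> j = n + 4)"
  by (auto simp: ext_bits_def)

lemma ball_ext_bits:
  "(\<forall>j \<in> U \<union> ext_bits n b1 b2 b3 b4. P j) \<longleftrightarrow>
    (\<forall>j\<in>U. P j) \<and> (b1 \<longrightarrow> P (Suc n)) \<and> (b2 \<longrightarrow> P (Suc (Suc n))) \<and>
    (b3 \<longrightarrow> P (n + 3)) \<and> (b4 \<longrightarrow> P (n + 4))"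
  by (auto simp: ext_bits_def)

lemma diff_ext_bits_low:
  "j \<in> {1..n} \<Longrightarrow> U \<union> ext_bits n b1 b2 b3 b4 - {j} = (U - {j}) \<union> ext_bits n b1 b2 b3 b4"
  by (auto simp: ext_bits_def)

lemma diff_ext_bits:
  assumes "U \<subseteq> {1..n}"
  shows "U \<union> ext_bits n b1 b2 b3 b4 - {Suc n} = U \<union> ext_bits n False b2 b3 b4"
    and "U \<union> ext_bits n b1 b2 b3 b4 - {Suc (Suc n)} = U \<union> ext_bits n b1 False b3 b4"
    and "U \<union> ext_bits n b1 b2 b3 b4 - {n + 3} = U \<union> ext_bits n b1 b2 False b4"
    and "U \<union> ext_bits n b1 b2 b3 b4 - {n + 4} = U \<union> ext_bits n b1 b2 b3 False"
  using assms by (auto simp: ext_bits_def)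

lemma coord_cases:
  "j \<in> {1..(n::nat) + 4} \<Longrightarrow> j \<in> {1..n} \<or> j = n + 1 \<or> j = n + 2 \<or> j = n + 3 \<or> j = n + 4"
  by auto

lemma ball_coord_cases:
  "(\<forall>j\<in>{1..(n::nat) + 4}. P j) \<longleftrightarrow>
    (\<forall>j\<in>{1..n}. P j) \<and> P (Suc n) \<and> P (Suc (Suc n)) \<and> P (n + 3) \<and> P (n + 4)"
proof -
  have "{1..n + 4} = {1..n} \<union> {Suc n, Suc (Suc n), n + 3, n + 4}" by auto
  then show ?thesis by auto
qed

lemma new_coord_cases: "j \<in> {(n::nat)<..n + 4} \<Longrightarrow> j = n + 1 \<or> j = n + 2 \<or> j = n + 3 \<or> j = n + 4"
  by auto

lemma ext_bits_cases:
  assumes "S \<subseteq> {1..n + 4}"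
  obtains U b1 b2 b3 b4 where "U \<subseteq> {1..n}" "S = U \<union> ext_bits n b1 b2 b3 b4"
proof
  show "S \<inter> {1..n} \<subseteq> {1..n}" by blast
  let ?E = "ext_bits n (Suc n \<in> S) (Suc (Suc n) \<in> S) (n + 3 \<in> S) (n + 4 \<in> S)"
  show "S = (S \<inter> {1..n}) \<union> ?E"
  proof (rule set_eqI)
    fix x
    have "x \<in> S \<Longrightarrow> x \<in> {1..n} \<or> x = Suc n \<or> x = Suc (Suc n) \<or> x = n + 3 \<or> x = n + 4"
      using assms coord_cases by auto
    then show "x \<in> S \<longleftrightarrow> x \<in> (S \<inter> {1..n}) \<union> ?E"
      by (auto simp: ext_bits_def)
  qed
qed

lemma mem_union_ext_bits:
  assumes "U \<subseteq> {1..n}"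
  shows "Suc n \<in> U \<union> ext_bits n b1 b2 b3 b4 \<longleftrightarrow> b1"
    and "Suc (Suc n) \<in> U \<union> ext_bits n b1 b2 b3 b4 \<longleftrightarrow> b2"
    and "n + 3 \<in> U \<union> ext_bits n b1 b2 b3 b4 \<longleftrightarrow> b3"
    and "n + 4 \<in> U \<union> ext_bits n b1 b2 b3 b4 \<longleftrightarrow> b4"
  using assms by (auto simp: ext_bits_def)

lemma union_ext_bits_eq_iff:
  assumes U: "U \<subseteq> {1..n}" and V: "V \<subseteq> {1..n}"
  shows "U \<union> ext_bits n b1 b2 b3 b4 = V \<union> ext_bits n c1 c2 c3 c4 \<longleftrightarrow>
    U = V \<and> b1 = c1 \<and> b2 = c2 \<and> b3 = c3 \<and> b4 = c4"
proof
  assume eq: "U \<union> ext_bits n b1 b2 b3 b4 = V \<union> ext_bits n c1 c2 c3 c4"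
  have "U = (U \<union> ext_bits n b1 b2 b3 b4) \<inter> {1..n}" "V = (V \<union> ext_bits n c1 c2 c3 c4) \<inter> {1..n}"
    using U V by (auto simp: ext_bits_def)
  then have "U = V" using eq by simp
  moreover have "b1 = c1 \<and> b2 = c2 \<and> b3 = c3 \<and> b4 = c4"
    using mem_union_ext_bits[OF U, of b1 b2 b3 b4] mem_union_ext_bits[OF V, of c1 c2 c3 c4] eq by simp
  ultimately show "U = V \<and> b1 = c1 \<and> b2 = c2 \<and> b3 = c3 \<and> b4 = c4" by blast
qed simp

lemma local_max_ext_bits_iff:
  fixes F :: "nat set \<Rightarrow> int"
  assumes U: "U \<subseteq> {1..n}"
  shows "local_max (n + 4) F (U \<union> ext_bits n b1 b2 b3 b4) \<longleftrightarrow>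
    (\<forall>j\<in>{1..n}. F (flip j U \<union> ext_bits n b1 b2 b3 b4) \<le> F (U \<union> ext_bits n b1 b2 b3 b4)) \<and>
    F (U \<union> ext_bits n (\<not> b1) b2 b3 b4) \<le> F (U \<union> ext_bits n b1 b2 b3 b4) \<and>
    F (U \<union> ext_bits n b1 (\<not> b2) b3 b4) \<le> F (U \<union> ext_bits n b1 b2 b3 b4) \<and>
    F (U \<union> ext_bits n b1 b2 (\<not> b3) b4) \<le> F (U \<union> ext_bits n b1 b2 b3 b4) \<and>
    F (U \<union> ext_bits n b1 b2 b3 (\<not> b4)) \<le> F (U \<union> ext_bits n b1 b2 b3 b4)"
  unfolding local_max_iff_flip ball_coord_cases flip_ext_bits[OF U] by (simp add: flip_ext_bits_low)

lemma spread_ge_diff: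
  assumes "U \<subseteq> {1..nvars k}" "V \<subseteq> {1..nvars k}"
  shows "4 * gk k U - 4 * gk k V \<le> spread k"
proof -
  have "gk k U \<le> Max (gk k ` Pow {1..nvars k})" using assms by (intro Max_ge) auto
  moreover have "Min (gk k ` Pow {1..nvars k}) \<le> gk k V" using assms by (intro Min_le) auto
  ultimately show ?thesis unfolding spread_def by simp
qed

lemma spread_nonneg: "0 \<le> spread k"
  using spread_ge_diff[of "{}" k "{}"] by simp

lemma penalty_empty: "penalty k {} = 0"
  by (simp add: penalty_def)

lemmas gk_Suc_ext_bits_empty = gk_Suc_ext_bits[OF empty_subsetI, unfolded Un_empty_left penalty_empty]

lemma gk_Suc_empty: "gk (Suc k) {} = 4 * gk k {}"
  using gk_Suc_ext_bits_empty[of k False False False False] by (simp add: ext_bits_False)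

lemma penalty_flip:
  assumes "j \<in> {1..nvars k}" "U \<subseteq> {1..nvars k}"
  shows "penalty k (flip j U) =
    (if j \<in> U then penalty k U - (2 * spread k + int j + 2) else penalty k U + (2 * spread k + int j + 2))"
  using finite_subset[OF assms(2)] by (auto simp: flip_def penalty_def sum.remove)

lemma penalty_bounds:
  assumes "U \<subseteq> {1..nvars k}"
  shows "0 \<le> penalty k U"
    and "penalty k U \<le> 2 * (spread k * int (nvars k)) + int (nvars k) * int (nvars k) + 2 * int (nvars k)"
proof -
  show "0 \<le> penalty k U" unfolding penalty_def using spread_nonneg by (intro sum_nonneg) auto
  have "penalty k U \<le> (\<Sum>i\<in>U. 2 * spread k + int (nvars k) + 2)"
    unfolding penalty_def using assms by (intro sum_mono) auto
  also have "\<dots> = int (card U) * (2 * spread k + int (nvars k) + 2)" by simp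
  also have "\<dots> \<le> int (nvars k) * (2 * spread k + int (nvars k) + 2)"
    using card_mono[OF _ assms] spread_nonneg by (intro mult_right_mono) auto
  finally show "penalty k U \<le> 2 * (spread k * int (nvars k)) + int (nvars k) * int (nvars k) + 2 * int (nvars k)"
    by (simp add: algebra_simps)
qed

lemma greedy_step_ext_bits:
  fixes F :: "nat set \<Rightarrow> int" and U :: "nat set" and n :: nat and b1 b2 b3 b4 :: bool
  defines "S \<equiv> U \<union> ext_bits n b1 b2 b3 b4"
  assumes U: "U \<subseteq> {1..n}" and j: "j \<in> {1..n + 4}"
    and up: "F S < F (flip j S)"
    and low: "\<And>i. i \<in> {1..n} \<Longrightarrow> i \<noteq> j \<Longrightarrow> F (flip i U \<union> ext_bits n b1 b2 b3 b4) < F (flip j S)"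
    and new1: "n + 1 \<noteq> j \<Longrightarrow> F (U \<union> ext_bits n (\<not> b1) b2 b3 b4) < F (flip j S)"
    and new2: "n + 2 \<noteq> j \<Longrightarrow> F (U \<union> ext_bits n b1 (\<not> b2) b3 b4) < F (flip j S)"
    and new3: "n + 3 \<noteq> j \<Longrightarrow> F (U \<union> ext_bits n b1 b2 (\<not> b3) b4) < F (flip j S)"
    and new4: "n + 4 \<noteq> j \<Longrightarrow> F (U \<union> ext_bits n b1 b2 b3 (\<not> b4)) < F (flip j S)"
  shows "greedy_step (n + 4) F S j"
  unfolding greedy_step_def
proof (intro conjI ballI impI j up)
  fix i assume i: "i \<in> {1..n + 4}" "i \<noteq> j"
  from coord_cases[OF i(1)] show "F (flip i S) < F (flip j S)"
    using low[of i] new1 new2 new3 new4 i(2)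
    by (elim disjE) (simp_all add: S_def flip_ext_bits_low flip_ext_bits[OF U])
qed

text \<open>A clearing sequence of A lists the order in which greedy search empties A one level up,
  where removing a gains 2M + a + 2 - 4 (f A - f (A - {a})). The weak maximality of
  f (A - {a}) and the loss bound B make the same order reappear another level up.\<close>

definition clearing_step :: "(nat set \<Rightarrow> int) \<Rightarrow> int \<Rightarrow> nat set \<Rightarrow> nat \<Rightarrow> bool" where
  "clearing_step f B A a \<longleftrightarrow> a \<in> A \<and> f A - B \<le> f (A - {a}) \<and>
     (\<forall>j\<in>A. j \<noteq> a \<longrightarrow> f (A - {j}) \<le> f (A - {a}) \<and> 4 * f (A - {j}) + int j < 4 * f (A - {a}) + int a)"

fun clearing :: "(nat set \<Rightarrow> int) \<Rightarrow> int \<Rightarrow> nat set \<Rightarrow> nat list \<Rightarrow> nat set \<Rightarrow> bool" where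
  "clearing f B A [] Z \<longleftrightarrow> A = Z"
| "clearing f B A (a # as) Z \<longleftrightarrow> clearing_step f B A a \<and> clearing f B (A - {a}) as Z"

lemma clearing_append:
  "clearing f B A (xs @ ys) Z \<longleftrightarrow> (\<exists>Y. clearing f B A xs Y \<and> clearing f B Y ys Z)"
  by (induction xs arbitrary: A) auto

locale level =
  fixes k :: nat
  assumes spread_large: "2 * int (nvars k) + 8 \<le> spread k"
begin

lemma level_bounds:
  defines "M \<equiv> spread k" and "n \<equiv> int (nvars k)"
  shows "12 \<le> M" "4 \<le> n * n" "M + n * n + 2 * n + 3 \<le> M * n"
proof -
  have n2: "2 \<le> n" unfolding n_def by (rule int_nvars_ge_2)
  have M: "2 * n + 8 \<le> M" using spread_large unfolding M_def n_def .
  have "0 \<le> (M - 2 * n - 8) * (n - 2)" using M n2 by simp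
  then have "2 * M + 2 * (n * n) + 4 * n - 16 \<le> M * n" by (simp add: algebra_simps)
  moreover have "2 * n \<le> n * n" using n2 by (intro mult_right_mono) auto
  ultimately show "12 \<le> M" "4 \<le> n * n" "M + n * n + 2 * n + 3 \<le> M * n"
    using M n2 by linarith+
qed

lemma run_at_bottom:
  assumes run: "greedy_run (nvars k) (gk k) {} js T"
  shows "greedy_run (nvars k + 4) (gk (Suc k)) {} js T"
proof -
  let ?E = "ext_bits (nvars k) False False False False"
  have "greedy_run (nvars k + 4) (gk (Suc k)) ({} \<union> ?E) js (T \<union> ?E)"
  proof (rule greedy_run_lift[OF run, where c = 4 and d = 0])
    show "gk (Suc k) (U \<union> ?E) = 4 * gk k U + 0" if "U \<subseteq> {1..nvars k}" for U
      using that by (simp add: gk_Suc_ext_bits)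
    show "gk (Suc k) (flip j (U \<union> ?E)) < gk (Suc k) (U \<union> ?E) + 4"
      if U: "U \<subseteq> {1..nvars k}" and "j \<in> {nvars k<..nvars k + 4}" for U j
      using new_coord_cases[OF that(2)] penalty_bounds[OF U]
      by (elim disjE) (simp_all add: flip_ext_bits[OF U] gk_Suc_ext_bits[OF U])
  qed (use ext_bits_inter_low in simp_all)
  then show ?thesis by (simp add: ext_bits_False)
qed

lemma run_set_bits_1_2:
  assumes T_subset: "T \<subseteq> {1..nvars k}" and "local_max (nvars k) (gk k) T"
  shows "greedy_run (nvars k + 4) (gk (Suc k)) T [nvars k + 1, nvars k + 2]
     (T \<union> ext_bits (nvars k) True True False False)"
proof -
  have T_flip_le: "gk k (flip i T) \<le> gk k T" if "i \<in> {1..nvars k}" for i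
    using assms(2) that by (simp add: local_max_iff_flip)
  note vals = gk_Suc_ext_bits[OF T_subset] gk_Suc_ext_bits[OF flip_subset[OF _ T_subset]]
    flip_ext_bits[OF T_subset]
  note bounds = penalty_bounds[OF T_subset] level_bounds
  have "greedy_step (nvars k + 4) (gk (Suc k)) (T \<union> ext_bits (nvars k) False False False False) (nvars k + 1)"
  proof (rule greedy_step_ext_bits[OF T_subset])
    fix i assume "i \<in> {1..nvars k}"
    then show "gk (Suc k) (flip i T \<union> ext_bits (nvars k) False False False False)
      < gk (Suc k) (flip (nvars k + 1) (T \<union> ext_bits (nvars k) False False False False))"
      using T_flip_le[of i] by (simp add: vals)
  qed (use bounds in \<open>simp_all add: vals\<close>)
  moreover have "greedy_step (nvars k + 4) (gk (Suc k)) (T \<union> ext_bits (nvars k) True False False False) (nvars k + 2)"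
  proof (rule greedy_step_ext_bits[OF T_subset])
    fix i assume "i \<in> {1..nvars k}"
    then show "gk (Suc k) (flip i T \<union> ext_bits (nvars k) True False False False)
      < gk (Suc k) (flip (nvars k + 2) (T \<union> ext_bits (nvars k) True False False False))"
      using T_flip_le[of i] bounds by (simp add: vals)
  qed (use bounds in \<open>simp_all add: vals\<close>)
  ultimately have "greedy_run (nvars k + 4) (gk (Suc k)) (T \<union> ext_bits (nvars k) False False False False)
    [nvars k + 1, nvars k + 2] (T \<union> ext_bits (nvars k) True True False False)"
    by (simp add: flip_ext_bits[OF T_subset])
  then show ?thesis by (simp add: ext_bits_False)
qed

lemma run_clearing:
  assumes "clearing (gk k) B U cl {}" "U \<subseteq> {1..nvars k}"
  shows "greedy_run (nvars k + 4) (gk (Suc k)) (U \<union> ext_bits (nvars k) True True False False) cl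
    (ext_bits (nvars k) True True False False)"
  using assms
proof (induction cl arbitrary: U)
  case Nil
  then show ?case by simp
next
  case (Cons a as)
  let ?E = "ext_bits (nvars k) True True False False"
  have U: "U \<subseteq> {1..nvars k}" and a: "a \<in> U"
    and key: "\<And>j. j \<in> U \<Longrightarrow> j \<noteq> a \<Longrightarrow> 4 * gk k (U - {j}) + int j < 4 * gk k (U - {a}) + int a"
    and rest: "clearing (gk k) B (U - {a}) as {}"
    using Cons.prems by (auto simp: clearing_step_def)
  have a_range: "a \<in> {1..nvars k}" using a U by auto
  have U': "U - {a} \<subseteq> {1..nvars k}" using U by auto
  have flip_a: "flip a (U \<union> ?E) = (U - {a}) \<union> ?E"
    using a a_range by (auto simp: flip_def ext_bits_def)
  have pen_a: "penalty k (U - {a}) = penalty k U - (2 * spread k + int a + 2)"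
    using penalty_flip[OF a_range U] a by (simp add: flip_def)
  note vals = gk_Suc_ext_bits[OF U] gk_Suc_ext_bits[OF U'] flip_ext_bits[OF U]
  note bounds = penalty_bounds[OF U] pen_a spread_ge_diff[OF U U'] level_bounds
  have "greedy_step (nvars k + 4) (gk (Suc k)) (U \<union> ?E) a"
  proof (rule greedy_step_ext_bits[OF U])
    fix i assume i: "i \<in> {1..nvars k}" "i \<noteq> a"
    have Ui: "flip i U \<subseteq> {1..nvars k}" using flip_subset[OF i(1) U] .
    have "4 * gk k (flip i U) - penalty k (flip i U) < 4 * gk k (U - {a}) - penalty k (U - {a})"
    proof (cases "i \<in> U")
      case True
      then show ?thesis using key[OF True i(2)] penalty_flip[OF i(1) U] bounds a
        by (simp add: flip_def)
    next
      case False
      then show ?thesis using spread_ge_diff[OF Ui U'] penalty_flip[OF i(1) U] bounds a i(1)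
        by simp
    qed
    then show "gk (Suc k) (flip i U \<union> ?E) < gk (Suc k) (flip a (U \<union> ?E))"
      unfolding flip_a by (simp add: gk_Suc_ext_bits[OF Ui] vals)
  qed (use a_range a bounds in \<open>simp_all add: flip_a vals\<close>)
  then show ?case using Cons.IH[OF rest U'] flip_a by simp
qed

lemma gk_Suc_insert_ext_bits_le:
  assumes "i \<in> {1..nvars k}"
  shows "gk (Suc k) (insert i (ext_bits (nvars k) b1 b2 b3 b4)) \<le> gk (Suc k) (ext_bits (nvars k) b1 b2 b3 b4) + spread k"
proof -
  have "4 * gk k {i} - 4 * gk k {} \<le> spread k" using assms by (intro spread_ge_diff) auto
  moreover have "0 \<le> penalty k {i}" using assms by (intro penalty_bounds) auto
  ultimately show ?thesis
    using gk_Suc_ext_bits[of "{i}" k b1 b2 b3 b4] gk_Suc_ext_bits[of "{}" k b1 b2 b3 b4] assms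
    by (cases b2) (simp_all add: penalty_empty)
qed

lemma greedy_step_from_ext_bits:
  fixes b1 b2 b3 b4 :: bool
  defines "E \<equiv> ext_bits (nvars k) b1 b2 b3 b4"
  assumes j: "j \<in> {nvars k<..nvars k + 4}"
    and gain: "gk (Suc k) E + spread k < gk (Suc k) (flip j E)"
    and new1: "nvars k + 1 \<noteq> j \<Longrightarrow> gk (Suc k) (ext_bits (nvars k) (\<not> b1) b2 b3 b4) < gk (Suc k) (flip j E)"
    and new2: "nvars k + 2 \<noteq> j \<Longrightarrow> gk (Suc k) (ext_bits (nvars k) b1 (\<not> b2) b3 b4) < gk (Suc k) (flip j E)"
    and new3: "nvars k + 3 \<noteq> j \<Longrightarrow> gk (Suc k) (ext_bits (nvars k) b1 b2 (\<not> b3) b4) < gk (Suc k) (flip j E)"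
    and new4: "nvars k + 4 \<noteq> j \<Longrightarrow> gk (Suc k) (ext_bits (nvars k) b1 b2 b3 (\<not> b4)) < gk (Suc k) (flip j E)"
  shows "greedy_step (nvars k + 4) (gk (Suc k)) E j"
proof -
  have "greedy_step (nvars k + 4) (gk (Suc k)) ({} \<union> E) j"
    unfolding E_def
  proof (rule greedy_step_ext_bits)
    fix i assume "i \<in> {1..nvars k}"
    then show "gk (Suc k) (flip i {} \<union> ext_bits (nvars k) b1 b2 b3 b4)
      < gk (Suc k) (flip j ({} \<union> ext_bits (nvars k) b1 b2 b3 b4))"
      using gk_Suc_insert_ext_bits_le[of i b1 b2 b3 b4] gain unfolding E_def by (simp add: flip_def)
  qed (use j gain spread_nonneg[of k] new1 new2 new3 new4 in \<open>auto simp: E_def\<close>)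
  then show ?thesis by simp
qed

lemma run_switch_bits:
  "greedy_run (nvars k + 4) (gk (Suc k)) (ext_bits (nvars k) True True False False)
     [nvars k + 3, nvars k + 4, nvars k + 2] (ext_bits (nvars k) True False True True)"
proof -
  note vals = gk_Suc_ext_bits_empty flip_ext_bits[OF empty_subsetI, unfolded Un_empty_left]
  have "greedy_step (nvars k + 4) (gk (Suc k)) (ext_bits (nvars k) True True False False) (nvars k + 3)"
    by (rule greedy_step_from_ext_bits; simp add: vals; use level_bounds in linarith)
  moreover have "greedy_step (nvars k + 4) (gk (Suc k)) (ext_bits (nvars k) True True True False) (nvars k + 4)"
    by (rule greedy_step_from_ext_bits; simp add: vals; use level_bounds in linarith)
  moreover have "greedy_step (nvars k + 4) (gk (Suc k)) (ext_bits (nvars k) True True True True) (nvars k + 2)"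
    by (rule greedy_step_from_ext_bits; simp add: vals; use level_bounds in linarith)
  ultimately show ?thesis by (simp add: vals)
qed

lemma run_at_top:
  assumes run: "greedy_run (nvars k) (gk k) {} js T"
  shows "greedy_run (nvars k + 4) (gk (Suc k)) (ext_bits (nvars k) True False True True) js
    (T \<union> ext_bits (nvars k) True False True True)"
proof -
  let ?E = "ext_bits (nvars k) True False True True"
  have "greedy_run (nvars k + 4) (gk (Suc k)) ({} \<union> ?E) js (T \<union> ?E)"
  proof (rule greedy_run_lift[OF run, where c = 4 and d = "5 + spread k + 5 * (spread k * int (nvars k))"])
    show "gk (Suc k) (U \<union> ?E) = 4 * gk k U + (5 + spread k + 5 * (spread k * int (nvars k)))"
      if "U \<subseteq> {1..nvars k}" for U
      using that by (simp add: gk_Suc_ext_bits)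
    show "gk (Suc k) (flip j (U \<union> ?E)) < gk (Suc k) (U \<union> ?E) + 4"
      if U: "U \<subseteq> {1..nvars k}" and "j \<in> {nvars k<..nvars k + 4}" for U j
      using new_coord_cases[OF that(2)] penalty_bounds[OF U] level_bounds
      by (elim disjE) (simp_all add: flip_ext_bits[OF U] gk_Suc_ext_bits[OF U])
  qed (use ext_bits_inter_low in simp_all)
  then show ?thesis by simp
qed

lemma greedy_run_Suc:
  assumes run: "greedy_run (nvars k) (gk k) {} js T"
    and T: "T \<subseteq> {1..nvars k}" "local_max (nvars k) (gk k) T"
    and clear: "clearing (gk k) B T cl {}"
  shows "greedy_run (nvars k + 4) (gk (Suc k)) {}
    (js @ [nvars k + 1, nvars k + 2] @ cl @ [nvars k + 3, nvars k + 4, nvars k + 2] @ js)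
    (T \<union> ext_bits (nvars k) True False True True)"
  unfolding greedy_run_append
  using run_at_bottom[OF run] run_set_bits_1_2[OF T] run_clearing[OF clear T(1)] run_switch_bits
    run_at_top[OF run]
  by blast

lemma clearing_top_bits:
  "clearing (gk (Suc k)) (5 * (spread k * int (nvars k))) (ext_bits (nvars k) True False True True)
    [nvars k + 1, nvars k + 4, nvars k + 3] {}"
proof -
  note vals = gk_Suc_ext_bits_empty ball_ext_bits[of "{}", unfolded Un_empty_left]
    diff_ext_bits[OF empty_subsetI, unfolded Un_empty_left]
  show ?thesis
    using level_bounds by (simp add: clearing_step_def vals gk_Suc_empty ext_bits_False mem_ext_bits)
qed

lemma clearing_lift:
  assumes "clearing (gk k) B U cl {}" "U \<subseteq> {1..nvars k}"
    and B: "4 * B + 2 * int (nvars k) \<le> spread k"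
  shows "clearing (gk (Suc k)) (5 * (spread k * int (nvars k)))
    (U \<union> ext_bits (nvars k) True False True True) cl (ext_bits (nvars k) True False True True)"
  using assms(1,2)
proof (induction cl arbitrary: U)
  case Nil
  then show ?case by simp
next
  case (Cons a as)
  let ?E = "ext_bits (nvars k) True False True True"
  have U: "U \<subseteq> {1..nvars k}" and a: "a \<in> U" and bound: "gk k U - B \<le> gk k (U - {a})"
    and order: "\<And>j. j \<in> U \<Longrightarrow> j \<noteq> a \<Longrightarrow>
      gk k (U - {j}) \<le> gk k (U - {a}) \<and> 4 * gk k (U - {j}) + int j < 4 * gk k (U - {a}) + int a"
    and rest: "clearing (gk k) B (U - {a}) as {}"
    using Cons.prems by (auto simp: clearing_step_def)
  have a_range: "a \<in> {1..nvars k}" using a U by auto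
  have U': "U - {a} \<subseteq> {1..nvars k}" using U by auto
  have remove_a: "U \<union> ?E - {a} = (U - {a}) \<union> ?E" by (rule diff_ext_bits_low[OF a_range])
  have low: "gk (Suc k) (U \<union> ?E - {j}) \<le> gk (Suc k) (U \<union> ?E - {a}) \<and>
      4 * gk (Suc k) (U \<union> ?E - {j}) + int j < 4 * gk (Suc k) (U \<union> ?E - {a}) + int a"
    if "j \<in> U" "j \<noteq> a" for j
  proof -
    have j_range: "j \<in> {1..nvars k}" using that U by auto
    have "U - {j} \<subseteq> {1..nvars k}" using U by auto
    then show ?thesis using order[OF that]
      by (simp add: diff_ext_bits_low[OF j_range] remove_a gk_Suc_ext_bits gk_Suc_ext_bits[OF U'])
  qed
  have "clearing_step (gk (Suc k)) (5 * (spread k * int (nvars k))) (U \<union> ?E) a"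
    unfolding clearing_step_def ball_ext_bits
    using low a bound B level_bounds a_range
    by (simp add: diff_ext_bits[OF U] remove_a gk_Suc_ext_bits[OF U] gk_Suc_ext_bits[OF U'])
  then show ?case using Cons.IH[OF rest U'] remove_a by simp
qed

lemma local_max_Suc_imp_not_bit2:
  assumes U: "U \<subseteq> {1..nvars k}"
    and max: "local_max (nvars k + 4) (gk (Suc k)) (U \<union> ext_bits (nvars k) b1 b2 b3 b4)"
  shows "\<not> b2"
proof
  assume b2
  note max = max[unfolded local_max_ext_bits_iff[OF U]]
  have "U = {}"
  proof (rule ccontr)
    assume "U \<noteq> {}"
    then obtain a where a: "a \<in> U" by blast
    have a_range: "a \<in> {1..nvars k}" using a U by auto
    have U': "flip a U \<subseteq> {1..nvars k}" by (rule flip_subset[OF a_range U])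
    have "gk (Suc k) (flip a U \<union> ext_bits (nvars k) b1 b2 b3 b4) \<le> gk (Suc k) (U \<union> ext_bits (nvars k) b1 b2 b3 b4)"
      using max a_range by blast
    then show False
      using \<open>b2\<close> a spread_ge_diff[OF U U'] spread_nonneg[of k] penalty_flip[OF a_range U] a_range
      by (simp add: gk_Suc_ext_bits[OF U] gk_Suc_ext_bits[OF U'])
  qed
  then show False
    using max \<open>b2\<close> level_bounds
    by (cases b1; cases b3; cases b4; simp add: gk_Suc_ext_bits_empty)
qed

lemma local_max_Suc_iff:
  assumes U: "U \<subseteq> {1..nvars k}"
  shows "local_max (nvars k + 4) (gk (Suc k)) (U \<union> ext_bits (nvars k) b1 b2 b3 b4) \<longleftrightarrow>
    local_max (nvars k) (gk k) U \<and> b1 \<and> \<not> b2 \<and> b3 \<and> b4"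
proof
  assume max: "local_max (nvars k + 4) (gk (Suc k)) (U \<union> ext_bits (nvars k) b1 b2 b3 b4)"
  have "\<not> b2" by (rule local_max_Suc_imp_not_bit2[OF U max])
  moreover have "local_max (nvars k) (gk k) U"
    unfolding local_max_iff_flip
  proof
    fix j assume j: "j \<in> {1..nvars k}"
    then have "gk (Suc k) (flip j U \<union> ext_bits (nvars k) b1 b2 b3 b4) \<le> gk (Suc k) (U \<union> ext_bits (nvars k) b1 b2 b3 b4)"
      using max by (simp add: local_max_ext_bits_iff[OF U])
    then show "gk k (flip j U) \<le> gk k U"
      using \<open>\<not> b2\<close> by (simp add: gk_Suc_ext_bits[OF U] gk_Suc_ext_bits[OF flip_subset[OF j U]])
  qed
  moreover have "b1 \<and> b3 \<and> b4"
    using max \<open>\<not> b2\<close> level_bounds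
    by (cases b1; cases b3; cases b4; simp add: local_max_ext_bits_iff[OF U] gk_Suc_ext_bits[OF U])
  ultimately show "local_max (nvars k) (gk k) U \<and> b1 \<and> \<not> b2 \<and> b3 \<and> b4" by blast
next
  assume "local_max (nvars k) (gk k) U \<and> b1 \<and> \<not> b2 \<and> b3 \<and> b4"
  then have "\<forall>j\<in>{1..nvars k}. gk k (flip j U) \<le> gk k U" and "b1" "\<not> b2" "b3" "b4"
    by (simp_all add: local_max_iff_flip)
  then show "local_max (nvars k + 4) (gk (Suc k)) (U \<union> ext_bits (nvars k) b1 b2 b3 b4)"
    unfolding local_max_ext_bits_iff[OF U]
    using penalty_bounds[OF U] level_bounds
    by (auto simp: gk_Suc_ext_bits[OF U] gk_Suc_ext_bits[OF flip_subset[OF _ U]])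
qed

lemma spread_Suc_large:
  assumes "greedy_run (nvars k) (gk k) {} js T" "T \<subseteq> {1..nvars k}"
  shows "4 * (5 * (spread k * int (nvars k))) + 2 * int (nvars (Suc k)) \<le> spread (Suc k)"
proof -
  have "T \<union> ext_bits (nvars k) True False True True \<subseteq> {1..nvars (Suc k)}"
    using assms(2) by (auto simp: ext_bits_def nvars_Suc)
  then have "4 * gk (Suc k) (T \<union> ext_bits (nvars k) True False True True) - 4 * gk (Suc k) {} \<le> spread (Suc k)"
    by (intro spread_ge_diff) auto
  then show ?thesis
    using greedy_run_value_le[OF assms(1)] spread_large
    by (simp add: gk_Suc_ext_bits[OF assms(2)] gk_Suc_empty nvars_Suc)
qed

end

definition level_invariant :: "nat \<Rightarrow> bool" where
  "level_invariant k \<longleftrightarrow>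
     (\<exists>js. greedy_run (nvars k) (gk k) {} js (peak k) \<and> 2 ^ (k + 1) \<le> length js) \<and>
     (\<forall>S \<subseteq> {1..nvars k}. local_max (nvars k) (gk k) S \<longleftrightarrow> S = peak k) \<and>
     (\<exists>B cl. 2 \<le> B \<and> 4 * B + 2 * int (nvars k) \<le> spread k \<and> clearing (gk k) B (peak k) cl {})"

lemma level_invariant_0: "level_invariant 0"
proof -
  have cube: "{1..nvars 0} = {1, 2}" by (auto simp: nvars_def)
  have peak: "peak 0 = {1, 2}" by (auto simp: peak_def nvars_def)
  note vals = flip_def gk.simps(1) xv_def
  have "greedy_run (nvars 0) (gk 0) {} [1, 2] (peak 0)"
    unfolding peak greedy_run.simps greedy_step_def cube by (auto simp: vals nvars_def)
  moreover have "local_max (nvars 0) (gk 0) S \<longleftrightarrow> S = peak 0" if "S \<subseteq> {1..nvars 0}" for S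
  proof -
    have "S = {} \<or> S = {1} \<or> S = {2} \<or> S = {1, 2}"
      using that unfolding cube by (cases "1 \<in> S"; cases "2 \<in> S") auto
    then show ?thesis
      unfolding peak local_max_iff_flip cube by (elim disjE) (auto simp: vals)
  qed
  moreover have "clearing (gk 0) 2 (peak 0) [2, 1] {}"
    unfolding peak by (auto simp: clearing_step_def vals)
  moreover have "4 * 2 + 2 * int (nvars 0) \<le> spread 0"
    using spread_ge_diff[of "{1, 2}" 0 "{}"] by (simp add: vals nvars_def)
  moreover have "2 ^ (0 + 1) \<le> length [1, 2 :: nat]" by simp
  ultimately show ?thesis
    unfolding level_invariant_def by (blast intro: order_refl)
qed

lemma level_invariant_Suc:
  assumes "level_invariant k"
  shows "level_invariant (Suc k)"
proof -
  obtain js B cl where run: "greedy_run (nvars k) (gk k) {} js (peak k)" and len: "2 ^ (k + 1) \<le> length js"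
    and unique: "\<forall>S \<subseteq> {1..nvars k}. local_max (nvars k) (gk k) S \<longleftrightarrow> S = peak k"
    and B: "2 \<le> B" "4 * B + 2 * int (nvars k) \<le> spread k" and clear: "clearing (gk k) B (peak k) cl {}"
    using assms unfolding level_invariant_def by blast
  interpret level k using B by unfold_locales linarith
  have peak_max: "local_max (nvars k) (gk k) (peak k)" using unique peak_subset by blast
  let ?E = "ext_bits (nvars k) True False True True"
  have "greedy_run (nvars (Suc k)) (gk (Suc k)) {}
    (js @ [nvars k + 1, nvars k + 2] @ cl @ [nvars k + 3, nvars k + 4, nvars k + 2] @ js) (peak (Suc k))"
    unfolding nvars_Suc peak_Suc by (rule greedy_run_Suc[OF run peak_subset peak_max clear])
  moreover have "local_max (nvars (Suc k)) (gk (Suc k)) S \<longleftrightarrow> S = peak (Suc k)"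
    if S: "S \<subseteq> {1..nvars (Suc k)}" for S
  proof -
    obtain U b1 b2 b3 b4 where "U \<subseteq> {1..nvars k}" "S = U \<union> ext_bits (nvars k) b1 b2 b3 b4"
      using S[unfolded nvars_Suc] by (rule ext_bits_cases)
    then show ?thesis
      using unique peak_subset by (simp add: nvars_Suc peak_Suc local_max_Suc_iff union_ext_bits_eq_iff)
  qed
  moreover have "clearing (gk (Suc k)) (5 * (spread k * int (nvars k))) (peak (Suc k)) (cl @ [nvars k + 1, nvars k + 4, nvars k + 3]) {}"
    unfolding peak_Suc clearing_append
    using clearing_lift[OF clear peak_subset B(2)] clearing_top_bits by blast
  moreover have "2 \<le> 5 * (spread k * int (nvars k))" using level_bounds by linarith
  ultimately show ?thesis
    unfolding level_invariant_def using len spread_Suc_large[OF run peak_subset] by auto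
qed

lemma level_invariant: "level_invariant k"
  by (induction k) (auto intro: level_invariant_0 level_invariant_Suc)

theorem theorem2:
  fixes n :: nat
  assumes "n mod 4 = 2"
  defines "target \<equiv> {1..n} - {i. 4 \<le> i \<and> i \<le> n - 2 \<and> 4 dvd i}"
  shows "\<exists>ps. greedy_path_no_ties n (g n) ps \<and> hd ps = {} \<and> last ps = target
           \<and> (\<forall>S \<in> Pow {1..n}. local_max n (g n) S \<longleftrightarrow> S = target)
           \<and> real (length ps - 1) > 2 powr (real n / 4)"
proof -
  define k where "k = (n - 2) div 4"
  have n: "n = nvars k" using assms(1) unfolding k_def nvars_def by presburger
  have g: "g n = gk k" unfolding g_def k_def ..
  have target: "target = peak k" unfolding target_def peak_def n ..
  obtain js where run: "greedy_run (nvars k) (gk k) {} js (peak k)" and len: "2 ^ (k + 1) \<le> length js"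
    and unique: "\<forall>S \<subseteq> {1..nvars k}. local_max (nvars k) (gk k) S \<longleftrightarrow> S = peak k"
    using level_invariant[of k] unfolding level_invariant_def by blast
  obtain ps where ps: "greedy_path_no_ties (nvars k) (gk k) ps" "hd ps = {}" "last ps = peak k"
    "length ps = Suc (length js)"
    using greedy_path_of_run[OF run] unique peak_subset by blast
  have "2 powr (real n / 4) < 2 powr (real (k + 1))"
    by (intro powr_less_mono) (auto simp: n nvars_def)
  also have "\<dots> = 2 ^ (k + 1)" by (rule powr_realpow) simp
  also have "\<dots> \<le> real (length js)" using len by (metis of_nat_le_iff of_nat_numeral of_nat_power)
  also have "\<dots> = real (length ps - 1)" using ps(4) by simp
  finally have long: "2 powr (real n / 4) < real (length ps - 1)" .
  show ?thesis
    unfolding g target using ps unique long n by (intro exI[of _ ps]) auto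
qed

end
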